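(* Let $(x_t^{**},y_t^{**})$, with $y_t^{**}=(\gamma^{**}_{1t},\dots,\gamma^{**}_{It})$, be a global minimax point on $\mathcal{X}\times\mathcal{Y}$ of \[ (x,y)\mapsto\sum_{n<t}\Big[L_n(x,y)+\frac{\lambda}{n^{1/9}}\sum_{i=1}^I\log(\gamma_i+1)\Big], \] let $(x_t^*,y_t^* )$ be a global minimax point on $\mathcal{X}\times\mathcal{Y}$ of $\sum_{n<t}L_n(x,y)$, and let $y_t^{\ddagger}=(\gamma^{\ddagger}_{1t},\dots,\gamma^{\ddagger}_{It})\in\arg\max_{y\in\mathcal{Y}}\sum_{n<t}\big[L_n(x_t^*,y)+\frac{\lambda}{n^{1/9}}\sum_{i=1}^I\log(\gamma_i+1)\big]$. Then \[ \sum_{n<t}\Big[L_n(x_t^{**},y_t^{**})+\frac{\lambda}{n^{1/9}}\sum_{i=1}^I\log(\gamma^{**}_{it}+1)\Big]\ge\min_{x\in\mathcal{X}}\max_{y\in\mathcal{Y}}\sum_{n<t}L_n(x,y) \] and \[ \sum_{n<t}\Big[L_n(x_t^{**},y_t^{**})-\frac{\lambda}{n^{1/9}}\sum_{i=1}^I\log(\gamma^{\ddagger}_{it}+1)\Big]\le\min_{x\in\mathcal{X}}\max_{y\in\mathcal{Y}}\sum_{n<t}L_n(x,y). \]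
   Context: Let $\mathcal{X}\subseteq\mathbb{R}^d$ be compact. For $t=1,\dots,T$, $f_t,c_{it}:\mathcal{X}\to\mathbb{R}$ ($i=1,\dots,I$) are $G_0$-Lipschitz w.r.t. $\ell_1$, $b_i\ge0$, and for $y=(\gamma_1,\dots,\gamma_I)$, $L_t(x,y)=f_t(x)+\sum_i\gamma_i[c_{it}(x)-b_i]$. Fix constants $\lambda>0$, $y_{\max}>0$ and $\mathcal{Y}=[0,y_{\max}]^I$. A global minimax point of $h$ on $\mathcal{X}\times\mathcal{Y}$ is $(x^*,y^* )$ with $h(x^*,y)\le h(x^*,y^* )\le\max_{y'\in\mathcal{Y}}h(x,y')$ for all $x\in\mathcal{X},y\in\mathcal{Y}$. *)

theory Defs
  imports "HOL-Analysis.Analysis"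
begin

text \<open>Points of R^d are vectors of type real^'d; dual variables y = (gamma_1..gamma_I)
  are vectors of type real^'i (the constraint index set is the finite type 'i).\<close>

definition l1_dist :: "real^'d \<Rightarrow> real^'d \<Rightarrow> real" where
  "l1_dist x x' = (\<Sum>j\<in>UNIV. \<bar>x$j - x'$j\<bar>)"

definition l1_lipschitz_on :: "(real^'d) set \<Rightarrow> real \<Rightarrow> (real^'d \<Rightarrow> real) \<Rightarrow> bool" where
  "l1_lipschitz_on X G g \<longleftrightarrow> (\<forall>x\<in>X. \<forall>x'\<in>X. \<bar>g x - g x'\<bar> \<le> G * l1_dist x x')"

definition box_Y :: "real \<Rightarrow> (real^'i) set" where
  "box_Y ymax = {y. \<forall>i. 0 \<le> y$i \<and> y$i \<le> ymax}"

definition lagr :: "(nat \<Rightarrow> real^'d \<Rightarrow> real) \<Rightarrow> (nat \<Rightarrow> 'i::finite \<Rightarrow> real^'d \<Rightarrow> real)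
    \<Rightarrow> ('i \<Rightarrow> real) \<Rightarrow> nat \<Rightarrow> real^'d \<Rightarrow> real^'i \<Rightarrow> real" where
  "lagr f c b n x y = f n x + (\<Sum>i\<in>UNIV. y$i * (c n i x - b i))"

definition global_minimax :: "('a \<Rightarrow> 'b \<Rightarrow> real) \<Rightarrow> 'a set \<Rightarrow> 'b set \<Rightarrow> 'a \<Rightarrow> 'b \<Rightarrow> bool" where
  "global_minimax h X Y xs ys \<longleftrightarrow> xs \<in> X \<and> ys \<in> Y \<and>
     (\<forall>x\<in>X. \<forall>y\<in>Y. h xs y \<le> h xs ys \<and> h xs ys \<le> (SUP y'\<in>Y. h x y'))"

end

theory Submission
  imports Defs
begin

text \<open>Adding to a payoff \<open>F\<close> a regularizer \<open>R \<ge> 0\<close> of the maximizing player can only raise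
  the saddle value, so the regularized saddle value dominates \<open>min max F\<close>. Conversely, playing
  the unregularized minimizer \<open>x\<^sup>*\<close> against the regularized game costs at most
  \<open>F(x\<^sup>*,y\<^sup>\<ddagger>) + R(y\<^sup>\<ddagger>) \<le> min max F + R(y\<^sup>\<ddagger>)\<close>, where \<open>y\<^sup>\<ddagger>\<close> is the regularized best response
  to \<open>x\<^sup>*\<close>.\<close>

lemma SUP_eq_attained:
  fixes h :: "'b \<Rightarrow> real"
  assumes "y0 \<in> Y" and "\<And>y. y \<in> Y \<Longrightarrow> h y \<le> h y0"
  shows "(SUP y\<in>Y. h y) = h y0"
  using assms by (intro cSup_eq_maximum) auto

lemma global_minimax_SUP_eq:
  assumes "global_minimax h X Y xs ys"
  shows "(SUP y\<in>Y. h xs y) = h xs ys"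
  using assms unfolding global_minimax_def by (intro SUP_eq_attained) auto

lemma global_minimax_le_SUP:
  assumes "global_minimax h X Y xs ys" and "x \<in> X"
  shows "h xs ys \<le> (SUP y\<in>Y. h x y)"
  using assms unfolding global_minimax_def by blast

lemma global_minimax_INF_SUP_eq:
  assumes "global_minimax h X Y xs ys"
  shows "(INF x\<in>X. SUP y\<in>Y. h x y) = h xs ys"
proof (rule cInf_eq_minimum)
  show "h xs ys \<in> (\<lambda>x. SUP y\<in>Y. h x y) ` X"
    using assms global_minimax_SUP_eq[OF assms] unfolding global_minimax_def
    by (metis image_eqI)
  show "\<And>z. z \<in> (\<lambda>x. SUP y\<in>Y. h x y) ` X \<Longrightarrow> h xs ys \<le> z"
    using global_minimax_le_SUP[OF assms] by blast
qed

lemma regularized_minimax_ge_INF_SUP: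
  fixes F :: "'a \<Rightarrow> 'b \<Rightarrow> real"
  assumes F: "global_minimax F X Y xs ys"
    and FR: "global_minimax (\<lambda>x y. F x y + R y) X Y xss yss"
    and R_nonneg: "\<And>y. y \<in> Y \<Longrightarrow> R y \<ge> 0"
  shows "F xss yss + R yss \<ge> (INF x\<in>X. SUP y\<in>Y. F x y)"
proof -
  have xss: "xss \<in> X" using FR unfolding global_minimax_def by blast
  have "(SUP y\<in>Y. F xss y) \<le> F xss yss + R yss"
  proof (rule cSUP_least)
    show "Y \<noteq> {}" using F unfolding global_minimax_def by blast
    fix y assume y: "y \<in> Y"
    have "F xss y + R y \<le> F xss yss + R yss"
      using FR xss y unfolding global_minimax_def by blast
    then show "F xss y \<le> F xss yss + R yss" using R_nonneg[OF y] by linarith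
  qed
  then show ?thesis
    using global_minimax_le_SUP[OF F xss] global_minimax_INF_SUP_eq[OF F] by linarith
qed

lemma regularized_minimax_le_INF_SUP:
  fixes F :: "'a \<Rightarrow> 'b \<Rightarrow> real"
  assumes F: "global_minimax F X Y xs ys"
    and FR: "global_minimax (\<lambda>x y. F x y + R y) X Y xss yss"
    and R_nonneg: "\<And>y. y \<in> Y \<Longrightarrow> R y \<ge> 0"
    and ydd: "ydd \<in> Y" and ydd_best: "\<And>y. y \<in> Y \<Longrightarrow> F xs y + R y \<le> F xs ydd + R ydd"
  shows "F xss yss - R ydd \<le> (INF x\<in>X. SUP y\<in>Y. F x y)"
proof -
  have xs: "xs \<in> X" and yss: "yss \<in> Y"
    using F FR unfolding global_minimax_def by blast+
  have "F xss yss + R yss \<le> (SUP y\<in>Y. F xs y + R y)"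
    using global_minimax_le_SUP[OF FR xs] .
  also have "\<dots> = F xs ydd + R ydd"
    using ydd ydd_best by (rule SUP_eq_attained)
  finally have "F xss yss + R yss \<le> F xs ydd + R ydd" .
  moreover have "F xs ydd \<le> F xs ys"
    using F ydd unfolding global_minimax_def by blast
  ultimately show ?thesis
    using R_nonneg[OF yss] global_minimax_INF_SUP_eq[OF F] by linarith
qed

lemma sum_ln_plus_one_nonneg_box:
  assumes "y \<in> box_Y ymax"
  shows "(\<Sum>i\<in>UNIV. ln (y$i + 1)) \<ge> 0"
  using assms by (intro sum_nonneg) (simp add: box_Y_def)

theorem lemma9:
  fixes X :: "(real^'d) set"
    and f :: "nat \<Rightarrow> real^'d \<Rightarrow> real"
    and c :: "nat \<Rightarrow> 'i::finite \<Rightarrow> real^'d \<Rightarrow> real"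
    and b :: "'i \<Rightarrow> real"
    and G0 lam ymax :: real and T t :: nat
    and xss xs :: "real^'d" and yss ys ydd :: "real^'i"
  assumes "compact X"
    and "\<And>n. n \<in> {1..T} \<Longrightarrow> l1_lipschitz_on X G0 (f n)"
    and "\<And>n i. n \<in> {1..T} \<Longrightarrow> l1_lipschitz_on X G0 (c n i)"
    and "\<And>i. b i \<ge> 0"
    and "lam > 0" and "ymax > 0"
    and "1 \<le> t" and "t \<le> T"
    and "global_minimax
           (\<lambda>x y. \<Sum>n\<in>{1..<t}. lagr f c b n x y
              + lam / (real n powr (1/9)) * (\<Sum>i\<in>UNIV. ln (y$i + 1)))
           X (box_Y ymax) xss yss"
    and "global_minimax (\<lambda>x y. \<Sum>n\<in>{1..<t}. lagr f c b n x y) X (box_Y ymax) xs ys"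
    and "ydd \<in> box_Y ymax"
    and "\<forall>y\<in>box_Y ymax.
           (\<Sum>n\<in>{1..<t}. lagr f c b n xs y + lam / (real n powr (1/9)) * (\<Sum>i\<in>UNIV. ln (y$i + 1)))
           \<le> (\<Sum>n\<in>{1..<t}. lagr f c b n xs ydd + lam / (real n powr (1/9)) * (\<Sum>i\<in>UNIV. ln (ydd$i + 1)))"
  shows "((\<Sum>n\<in>{1..<t}. lagr f c b n xss yss + lam / (real n powr (1/9)) * (\<Sum>i\<in>UNIV. ln (yss$i + 1)))
           \<ge> (INF x\<in>X. SUP y\<in>box_Y ymax. \<Sum>n\<in>{1..<t}. lagr f c b n x y))
    \<and> ((\<Sum>n\<in>{1..<t}. lagr f c b n xss yss - lam / (real n powr (1/9)) * (\<Sum>i\<in>UNIV. ln (ydd$i + 1)))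
           \<le> (INF x\<in>X. SUP y\<in>box_Y ymax. \<Sum>n\<in>{1..<t}. lagr f c b n x y))"
proof -
  \<comment> \<open>Compactness and the Lipschitz bounds only serve to make the assumed minimax points exist.\<close>
  define F where "F x y = (\<Sum>n\<in>{1..<t}. lagr f c b n x y)" for x y
  define R where "R y = (\<Sum>n\<in>{1..<t}. lam / real n powr (1/9)) * (\<Sum>i\<in>UNIV. ln (y$i + 1))"
    for y :: "real^'i"
  have split: "(\<Sum>n\<in>{1..<t}. lagr f c b n x y + lam / real n powr (1/9) * (\<Sum>i\<in>UNIV. ln (y$i + 1)))
      = F x y + R y" for x y
    unfolding F_def R_def by (simp add: sum.distrib sum_distrib_right)
  have split_minus: "(\<Sum>n\<in>{1..<t}. lagr f c b n x y - lam / real n powr (1/9) * (\<Sum>i\<in>UNIV. ln (y'$i + 1)))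
      = F x y - R y'" for x y y'
    unfolding F_def R_def by (simp add: sum_subtractf sum_distrib_right)
  have R_nonneg: "R y \<ge> 0" if "y \<in> box_Y ymax" for y
    unfolding R_def using \<open>lam > 0\<close> sum_ln_plus_one_nonneg_box[OF that]
    by (intro mult_nonneg_nonneg[OF sum_nonneg]) simp_all
  have F: "global_minimax F X (box_Y ymax) xs ys"
    using assms(10) unfolding F_def .
  have FR: "global_minimax (\<lambda>x y. F x y + R y) X (box_Y ymax) xss yss"
    using assms(9) unfolding split .
  have ydd_best: "F xs y + R y \<le> F xs ydd + R ydd" if "y \<in> box_Y ymax" for y
    using assms(12) that unfolding split by blast
  show ?thesis
    unfolding split split_minus F_def[symmetric]
    using regularized_minimax_ge_INF_SUP[OF F FR R_nonneg]
      regularized_minimax_le_INF_SUP[OF F FR R_nonneg assms(11) ydd_best]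
    by blast
qed

end
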